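(* Let $M$ be the star matrix of a partition of the hypercube ${\bf Z}_q^n$ into subcubes all of the same dimension, and suppose $M$ contains a submatrix $T$ which is a transfractal. Then all rows of $M$ that pass through $T$ coincide in every column of $M$ not belonging to $T$; that is, for every column $s$ of $M$ not among the columns of $T$, all rows of $T$ have the same entry (the same element of ${\bf Z}_q\cup\{*\}$) in column $s$.
   Context: A subcube of ${\bf Z}_q^n$ is obtained by fixing some coordinates and letting the others run through ${\bf Z}_q$; its dimension is the number of free coordinates, and its star pattern is the vector over ${\bf Z}_q\cup\{*\}$ with the fixed values in fixed coordinates and $*$ in free ones. The star matrix of a partition of ${\bf Z}_q^n$ into subcubes is the matrix whose rows are the star patterns of the subcubes. Fractal matrices: $M_{q,0}$ has one row and zero columns; for $m\ge1$, $M_{q,m}$ consists of $q$ horizontal blocks indexed by $a=0,\dots,q-1$, each with $q^{m-1}$ rows; its first column has entry $a$ in every row of block $a$; its remaining columns are divided into $q$ vertical stripes of width equal to the number of columns of $M_{q,m-1}$, and in block $a$ the $a$-th stripe is a copy of $M_{q,m-1}$ while other stripes of block $a$ are all $*$. A fractal matrix is any matrix obtained from some $M_{q,m}$ ($m\ge1$) by permuting rows and columns. A submatrix $T$ of $M$ (given by a set of rows and a set of columns, not necessarily consecutive) is a transfractal if $T$ is a fractal matrix (with the same $q$) and each column of $M$ used by $T$ contains only $*$ in all rows of $M$ not used by $T$. *)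

theory Defs
  imports Main
begin

text \<open>Entries of a star pattern: None stands for the symbol *, Some a for a \<in> Z_q
  (represented by a natural number a < q).\<close>

type_synonym entry = "nat option"

definition is_point :: "nat \<Rightarrow> nat \<Rightarrow> nat list \<Rightarrow> bool" where
  "is_point q n x \<longleftrightarrow> length x = n \<and> (\<forall>i<n. x ! i < q)"

definition is_subcube :: "nat \<Rightarrow> nat \<Rightarrow> entry list \<Rightarrow> bool" where
  "is_subcube q n c \<longleftrightarrow> length c = n \<and> (\<forall>i<n. \<forall>a. c ! i = Some a \<longrightarrow> a < q)"

definition in_cube :: "nat list \<Rightarrow> entry list \<Rightarrow> bool" where
  "in_cube x c \<longleftrightarrow> (\<forall>i<length c. c ! i = None \<or> c ! i = Some (x ! i))"

definition cube_dim :: "entry list \<Rightarrow> nat" where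
  "cube_dim c = card {i. i < length c \<and> c ! i = None}"

definition is_partition_star_matrix :: "nat \<Rightarrow> nat \<Rightarrow> entry list list \<Rightarrow> bool" where
  "is_partition_star_matrix q n M \<longleftrightarrow>
     (\<forall>r<length M. is_subcube q n (M ! r)) \<and>
     (\<forall>x. is_point q n x \<longrightarrow> (\<exists>!r. r < length M \<and> in_cube x (M ! r)))"

fun frac_cols :: "nat \<Rightarrow> nat \<Rightarrow> nat" where
  "frac_cols q 0 = 0"
| "frac_cols q (Suc m) = 1 + q * frac_cols q m"

text \<open>The fractal matrix M_{q,m} as a function (row index, column index);
  rows 0..<q^m, columns 0..<frac_cols q m.  Block a consists of rows
  a*q^(m-1) ..< (a+1)*q^(m-1).\<close>
fun fractal :: "nat \<Rightarrow> nat \<Rightarrow> nat \<Rightarrow> nat \<Rightarrow> entry" where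
  "fractal q 0 r j = None"
| "fractal q (Suc m) r j =
     (let a = r div q ^ m; r' = r mod q ^ m in
      if j = 0 then Some a
      else (let b = (j - 1) div frac_cols q m; j' = (j - 1) mod frac_cols q m in
            if b = a then fractal q m r' j' else None))"

definition is_transfractal :: "nat \<Rightarrow> entry list list \<Rightarrow> nat set \<Rightarrow> nat set \<Rightarrow> bool" where
  "is_transfractal q M R C \<longleftrightarrow>
     (\<exists>m \<sigma> \<tau>. m \<ge> 1 \<and> bij_betw \<sigma> {0..<q ^ m} R \<and> bij_betw \<tau> {0..<frac_cols q m} C \<and>
        (\<forall>i<q ^ m. \<forall>j<frac_cols q m. M ! (\<sigma> i) ! (\<tau> j) = fractal q m i j)) \<and>
     (\<forall>j\<in>C. \<forall>r<length M. r \<notin> R \<longrightarrow> M ! r ! j = None)"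

end

theory Submission
  imports Defs
begin

text \<open>Distinct rows of a fractal matrix are disjoint subcubes: some column carries two
  different fixed values in them.  Given two rows \<open>r\<^sub>a, r\<^sub>b\<close> of the
  transfractal that differ in a column \<open>s\<close> outside it, with
  \<open>r\<^sub>a\<close> fixing the value \<open>a\<close> there, pick a point \<open>y\<close> of
  \<open>r\<^sub>b\<close> with \<open>y\<^sub>s \<noteq> a\<close> and overwrite its coordinates in the transfractal
  columns by those of a point of \<open>r\<^sub>a\<close>.  The row containing the new point is
  not \<open>r\<^sub>a\<close> (coordinate \<open>s\<close>), not another transfractal row (it is disjoint
  from \<open>r\<^sub>a\<close> on the transfractal columns), and not a row outside the
  transfractal, since such a row is all stars on those columns and would then
  contain \<open>y\<close> as well.\<close>

definition clash :: "entry \<Rightarrow> entry \<Rightarrow> bool" where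
  "clash e e' \<longleftrightarrow> (\<exists>a b. e = Some a \<and> e' = Some b \<and> a \<noteq> b)"

lemma fractal_rows_clash:
  assumes "i < q ^ m" "i' < q ^ m" "i \<noteq> i'"
  shows "\<exists>j < frac_cols q m. clash (fractal q m i j) (fractal q m i' j)"
  using assms
proof (induction m arbitrary: i i')
  case 0
  then show ?case by simp
next
  case (Suc m)
  define a where "a = i div q ^ m"
  define a' where "a' = i' div q ^ m"
  show ?case
  proof (cases "a = a'")
    case False
    then have "clash (fractal q (Suc m) i 0) (fractal q (Suc m) i' 0)"
      by (simp add: clash_def a_def a'_def)
    then show ?thesis by auto
  next
    case True
    have qm: "q ^ m > 0"
      using Suc.prems(1) by (cases "q ^ m = 0") auto
    have "i mod q ^ m \<noteq> i' mod q ^ m"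
      using True Suc.prems(3) unfolding a_def a'_def by (metis div_mult_mod_eq)
    then obtain j where j: "j < frac_cols q m"
      and clash_j: "clash (fractal q m (i mod q ^ m) j) (fractal q m (i' mod q ^ m) j)"
      using Suc.IH[OF mod_less_divisor[OF qm] mod_less_divisor[OF qm]] by blast
    define fc where "fc = frac_cols q m"
    have "a < q"
      unfolding a_def using Suc.prems(1) by (simp add: less_mult_imp_div_less mult.commute)
    have "a * fc + j < Suc a * fc"
      using j by (simp add: fc_def)
    also have "\<dots> \<le> q * fc"
      using \<open>a < q\<close> by (intro mult_le_mono1) simp
    finally have "a * fc + j < q * fc" .
    then have col: "Suc (a * fc + j) < frac_cols q (Suc m)"
      by (simp add: fc_def)
    have "(a * fc + j) div fc = a" "(a * fc + j) mod fc = j"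
      using j by (simp_all add: fc_def)
    then have "clash (fractal q (Suc m) i (Suc (a * fc + j))) (fractal q (Suc m) i' (Suc (a * fc + j)))"
      using clash_j True by (simp add: Let_def a_def a'_def fc_def)
    then show ?thesis using col by blast
  qed
qed

lemma transfractal_rows_clash:
  assumes "is_transfractal q M R C" "r \<in> R" "r' \<in> R" "r \<noteq> r'"
  shows "\<exists>j\<in>C. clash (M ! r ! j) (M ! r' ! j)"
proof -
  obtain m \<sigma> \<tau> where \<sigma>: "bij_betw \<sigma> {0..<q ^ m} R"
    and \<tau>: "bij_betw \<tau> {0..<frac_cols q m} C"
    and entries: "\<forall>i<q ^ m. \<forall>j<frac_cols q m. M ! (\<sigma> i) ! (\<tau> j) = fractal q m i j"
    using assms(1) unfolding is_transfractal_def by blast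
  obtain i i' where i: "i < q ^ m" "\<sigma> i = r" and i': "i' < q ^ m" "\<sigma> i' = r'"
    using \<sigma> assms(2,3) unfolding bij_betw_def by auto
  then obtain j where j: "j < frac_cols q m" "clash (fractal q m i j) (fractal q m i' j)"
    using fractal_rows_clash assms(4) by blast
  have "\<tau> j \<in> C"
    using \<tau> j(1) by (auto dest: bij_betwE)
  moreover have "M ! r ! \<tau> j = fractal q m i j" "M ! r' ! \<tau> j = fractal q m i' j"
    using entries i i' j(1) by auto
  ultimately show ?thesis
    using j(2) by metis
qed

lemma subcube_has_point:
  assumes "is_subcube q n c" "s < n" "v < q" "c ! s = None \<or> c ! s = Some v"
  shows "\<exists>y. is_point q n y \<and> in_cube y c \<and> y ! s = v"
proof -
  define y where "y = map (\<lambda>k. case c ! k of None \<Rightarrow> v | Some b \<Rightarrow> b) [0..<n]"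
  have "is_point q n y"
    using assms(1,3) unfolding is_point_def is_subcube_def y_def
    by (auto split: option.split)
  moreover have "in_cube y c"
    using assms(1) unfolding in_cube_def is_subcube_def y_def
    by (auto split: option.split)
  moreover have "y ! s = v"
    using assms(2,4) unfolding y_def by auto
  ultimately show ?thesis by blast
qed

lemma subcube_has_point_avoiding:
  assumes "is_subcube q n c" "2 \<le> q" "s < n" "c ! s \<noteq> Some a"
  shows "\<exists>y. is_point q n y \<and> in_cube y c \<and> y ! s \<noteq> a"
proof -
  obtain v where v: "v < q" "v \<noteq> a" "c ! s = None \<or> c ! s = Some v"
  proof (cases "c ! s")
    case None
    have "(if a = 0 then 1 else 0) < q" "(if a = 0 then 1 else 0) \<noteq> a"
      using assms(2) by auto
    then show ?thesis using that None by blast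
  next
    case (Some b)
    then show ?thesis
      using that assms(1,3,4) unfolding is_subcube_def by auto
  qed
  then show ?thesis
    using subcube_has_point[OF assms(1,3) v(1,3)] by blast
qed

lemma subcubes_clash_imp_two_le:
  assumes "is_subcube q n c" "is_subcube q n d" "j < n" "clash (c ! j) (d ! j)"
  shows "2 \<le> q"
  using assms unfolding is_subcube_def clash_def by fastforce

lemma in_cube_clash_coord_neq:
  assumes "in_cube x c" "in_cube x' c'" "j < length c" "j < length c'" "clash (c ! j) (c' ! j)"
  shows "x ! j \<noteq> x' ! j"
  using assms unfolding in_cube_def clash_def by fastforce

lemma in_cube_change_star_coords:
  assumes "in_cube x c" "\<forall>j\<in>C. j < length c \<longrightarrow> c ! j = None"
    and "\<forall>k<length c. k \<notin> C \<longrightarrow> y ! k = x ! k"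
  shows "in_cube y c"
  using assms unfolding in_cube_def by metis

lemma partition_row_unique:
  assumes "is_partition_star_matrix q n M" "is_point q n x"
    and "r < length M" "in_cube x (M ! r)" "r' < length M" "in_cube x (M ! r')"
  shows "r = r'"
  using assms unfolding is_partition_star_matrix_def by blast

lemma partition_row_length:
  assumes "is_partition_star_matrix q n M" "r < length M"
  shows "length (M ! r) = n"
  using assms unfolding is_partition_star_matrix_def is_subcube_def by blast

lemma partition_block_fixed_entry_shared:
  assumes part: "is_partition_star_matrix q n M"
    and R: "R \<subseteq> {0..<length M}" and C: "C \<subseteq> {0..<n}"
    and stars: "\<forall>j\<in>C. \<forall>r<length M. r \<notin> R \<longrightarrow> M ! r ! j = None"
    and clashes: "\<forall>r\<in>R. \<forall>r'\<in>R. r \<noteq> r' \<longrightarrow> (\<exists>j\<in>C. clash (M ! r ! j) (M ! r' ! j))"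
    and ra: "ra \<in> R" and rb: "rb \<in> R" and s: "s < n" "s \<notin> C"
    and a: "M ! ra ! s = Some a"
  shows "M ! rb ! s = Some a"
proof (rule ccontr)
  assume rb_s: "M ! rb ! s \<noteq> Some a"
  have ra_M: "ra < length M" and rb_M: "rb < length M"
    using R ra rb by auto
  have subcube: "is_subcube q n (M ! r)" if "r < length M" for r
    using part that unfolding is_partition_star_matrix_def by blast
  have len: "length (M ! r) = n" if "r < length M" for r
    using partition_row_length[OF part that] .
  have "ra \<noteq> rb" using a rb_s by auto
  then obtain j where "j \<in> C" "clash (M ! ra ! j) (M ! rb ! j)"
    using clashes ra rb by blast
  then have "2 \<le> q"
    using subcubes_clash_imp_two_le[OF subcube[OF ra_M] subcube[OF rb_M]] C by auto
  then obtain y where y: "is_point q n y" "in_cube y (M ! rb)" "y ! s \<noteq> a"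
    using subcube_has_point_avoiding[OF subcube[OF rb_M] _ s(1) rb_s] by blast
  have "a < q"
    using subcube[OF ra_M] s(1) a unfolding is_subcube_def by blast
  then obtain z where z: "is_point q n z" "in_cube z (M ! ra)"
    using subcube_has_point[OF subcube[OF ra_M] s(1)] a by blast
  define x where "x = map (\<lambda>k. if k \<in> C then z ! k else y ! k) [0..<n]"
  have x: "is_point q n x"
    using y(1) z(1) unfolding x_def is_point_def by auto
  obtain r where r: "r < length M" "in_cube x (M ! r)"
    using part x unfolding is_partition_star_matrix_def by blast
  show False
  proof (cases "r \<in> R")
    case False
    have "\<forall>j\<in>C. j < length (M ! r) \<longrightarrow> M ! r ! j = None"
      using stars r(1) False by blast
    moreover have "\<forall>k<length (M ! r). k \<notin> C \<longrightarrow> y ! k = x ! k"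
      using len[OF r(1)] unfolding x_def by simp
    ultimately have "in_cube y (M ! r)"
      using in_cube_change_star_coords[OF r(2)] by blast
    then have "r = rb"
      using partition_row_unique[OF part y(1) r(1) _ rb_M y(2)] by blast
    then show False using False rb by blast
  next
    case True
    show False
    proof (cases "r = ra")
      case True
      have "x ! s \<noteq> a" using y(3) s unfolding x_def by simp
      then show False
        using r(2) True a s(1) len[OF ra_M] unfolding in_cube_def by auto
    next
      case False
      then obtain j where j: "j \<in> C" "clash (M ! r ! j) (M ! ra ! j)"
        using clashes \<open>r \<in> R\<close> ra by blast
      have "j < n" using j(1) C by auto
      then have "x ! j \<noteq> z ! j"
        using in_cube_clash_coord_neq[OF r(2) z(2) _ _ j(2)] len r(1) ra_M by simp
      then show False
        using j(1) \<open>j < n\<close> unfolding x_def by simp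
    qed
  qed
qed

theorem lemma4:
  fixes q n :: nat and M :: "entry list list" and R C :: "nat set"
  assumes "is_partition_star_matrix q n M"
    and "\<forall>r1<length M. \<forall>r2<length M. cube_dim (M ! r1) = cube_dim (M ! r2)"
    and "R \<subseteq> {0..<length M}" and "C \<subseteq> {0..<n}"
    and "is_transfractal q M R C"
  shows "\<forall>s<n. s \<notin> C \<longrightarrow> (\<forall>r1\<in>R. \<forall>r2\<in>R. M ! r1 ! s = M ! r2 ! s)"
proof (intro allI impI ballI)
  fix s r1 r2 assume s: "s < n" "s \<notin> C" and r1: "r1 \<in> R" and r2: "r2 \<in> R"
  have stars: "\<forall>j\<in>C. \<forall>r<length M. r \<notin> R \<longrightarrow> M ! r ! j = None"
    using assms(5) unfolding is_transfractal_def by blast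
  have clashes: "\<forall>r\<in>R. \<forall>r'\<in>R. r \<noteq> r' \<longrightarrow> (\<exists>j\<in>C. clash (M ! r ! j) (M ! r' ! j))"
    using transfractal_rows_clash[OF assms(5)] by blast
  note shared = partition_block_fixed_entry_shared[OF assms(1,3,4) stars clashes _ _ s]
  show "M ! r1 ! s = M ! r2 ! s"
  proof (cases "M ! r1 ! s")
    case None
    then show ?thesis using shared[OF r2 r1] by (cases "M ! r2 ! s") auto
  next
    case (Some a)
    then show ?thesis using shared[OF r1 r2] by simp
  qed
qed

end
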